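(* Let $X$ be a finite $T_0$ topological space and let $f,g\in \mathrm{Homeo}(X)$. Then $f$ is isotopic to $g$ if and only if $f=g$. In particular, $\mathrm{Mod}(X)=\mathrm{Homeo}(X)$.
   Context: $\mathrm{Homeo}(X)$ is the group of homeomorphisms of $X$. Two homeomorphisms $f,g$ of $X$ are isotopic if there is a continuous map $H:X\times [0,1]\to X$ such that each $H_t=H(\cdot,t)$ is a homeomorphism of $X$, $H_0=f$ and $H_1=g$. The mapping class group $\mathrm{Mod}(X)$ is the group of isotopy classes of homeomorphisms of $X$. *)

theory Defs
  imports "HOL-Analysis.Analysis"
begin

definition isotopic :: "'a topology \<Rightarrow> ('a \<Rightarrow> 'a) \<Rightarrow> ('a \<Rightarrow> 'a) \<Rightarrow> bool" where
  "isotopic X f g \<longleftrightarrow>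
     (\<exists>H :: 'a \<times> real \<Rightarrow> 'a.
        continuous_map (prod_topology X (top_of_set {0..1})) X H \<and>
        (\<forall>t\<in>{0..1}. homeomorphic_map X X (\<lambda>x. H (x, t))) \<and>
        (\<forall>x\<in>topspace X. H (x, 0) = f x) \<and>
        (\<forall>x\<in>topspace X. H (x, 1) = g x))"

end

theory Submission
  imports Defs
begin

text \<open>In a finite space every point y has a smallest open neighbourhood U y, and in a
  T0 space y is determined by U y. A homeomorphism preserves the cardinalities of these
  sets, so if two homeomorphisms a, b satisfy a x \<in> U (b x) for all x, then
  U (a x) \<subseteq> U (b x) have equal size, whence a = b. Along an isotopy H, continuity and
  finiteness make the times t with H(x,t) \<in> U (H(x,s)) for all x an open neighbourhood
  of s; hence t \<mapsto> H(-,t) is locally constant, so constant on the connected interval.\<close>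

definition minimal_nbhd :: "'a topology \<Rightarrow> 'a \<Rightarrow> 'a set" where
  "minimal_nbhd X y = \<Inter>{U. openin X U \<and> y \<in> U}"

lemma centre_in_minimal_nbhd: "y \<in> minimal_nbhd X y"
  by (simp add: minimal_nbhd_def)

lemma minimal_nbhd_subset: "\<lbrakk>openin X U; y \<in> U\<rbrakk> \<Longrightarrow> minimal_nbhd X y \<subseteq> U"
  by (auto simp: minimal_nbhd_def)

lemma minimal_nbhd_subset_topspace: "y \<in> topspace X \<Longrightarrow> minimal_nbhd X y \<subseteq> topspace X"
  by (simp add: minimal_nbhd_subset)

lemma minimal_nbhd_mono: "z \<in> minimal_nbhd X y \<Longrightarrow> minimal_nbhd X z \<subseteq> minimal_nbhd X y"
  by (auto simp: minimal_nbhd_def)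

lemma openin_minimal_nbhd:
  assumes "finite (topspace X)" "y \<in> topspace X"
  shows "openin X (minimal_nbhd X y)"
proof -
  have "finite {U. openin X U \<and> y \<in> U}"
    by (rule finite_subset[of _ "Pow (topspace X)"]) (use assms(1) in \<open>auto dest: openin_subset\<close>)
  then show ?thesis
    unfolding minimal_nbhd_def using assms(2) by (intro openin_Inter) auto
qed

lemma t0_space_minimal_nbhd_eqD:
  assumes "t0_space X" "x \<in> topspace X" "y \<in> topspace X"
    and "minimal_nbhd X x = minimal_nbhd X y"
  shows "x = y"
proof (rule ccontr)
  assume "x \<noteq> y"
  with assms(1-3) obtain U where U: "openin X U" and sep: "x \<notin> U \<longleftrightarrow> y \<in> U"
    unfolding t0_space_def by blast
  have xy: "x \<in> minimal_nbhd X y" and yx: "y \<in> minimal_nbhd X x"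
    using assms(4) centre_in_minimal_nbhd by metis+
  show False
  proof (cases "y \<in> U")
    case True
    then have "x \<in> U"
      using minimal_nbhd_subset[OF U] xy by blast
    with sep True show False by simp
  next
    case False
    with sep have "x \<in> U" by simp
    then have "y \<in> U"
      using minimal_nbhd_subset[OF U] yx by blast
    with False show False by simp
  qed
qed

lemma homeomorphic_map_minimal_nbhd_iff:
  assumes h: "homeomorphic_map X Y h" and y: "y \<in> topspace X" and z: "z \<in> topspace X"
  shows "h z \<in> minimal_nbhd Y (h y) \<longleftrightarrow> z \<in> minimal_nbhd X y"
proof
  assume hz: "h z \<in> minimal_nbhd Y (h y)"
  show "z \<in> minimal_nbhd X y" unfolding minimal_nbhd_def
  proof (intro InterI, clarify)
    fix U assume U: "openin X U" "y \<in> U"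
    have "U \<subseteq> topspace X"
      using U(1) by (rule openin_subset)
    then have "openin Y (h ` U)"
      using homeomorphic_map_openness[OF h] U(1) by simp
    moreover have "h y \<in> h ` U"
      using U(2) by (rule imageI)
    ultimately have "h z \<in> h ` U"
      using hz by (meson minimal_nbhd_subset subsetD)
    then obtain w where "w \<in> U" "h w = h z"
      by auto
    moreover have "inj_on h (topspace X)"
      using h by (rule homeomorphic_imp_injective_map)
    ultimately show "z \<in> U"
      using \<open>U \<subseteq> topspace X\<close> z by (metis inj_onD subsetD)
  qed
next
  assume hz: "z \<in> minimal_nbhd X y"
  show "h z \<in> minimal_nbhd Y (h y)" unfolding minimal_nbhd_def
  proof (intro InterI, clarify)
    fix V assume V: "openin Y V" "h y \<in> V"
    have "openin X {x \<in> topspace X. h x \<in> V}"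
      using homeomorphic_imp_continuous_map[OF h] V(1) by (rule openin_continuous_map_preimage)
    moreover have "y \<in> {x \<in> topspace X. h x \<in> V}"
      using y V(2) by simp
    ultimately have "h z \<in> h ` {x \<in> topspace X. h x \<in> V}"
      using hz by (meson minimal_nbhd_subset subsetD imageI)
    then show "h z \<in> V"
      by auto
  qed
qed

lemma homeomorphic_map_image_minimal_nbhd:
  assumes h: "homeomorphic_map X Y h" and y: "y \<in> topspace X"
  shows "h ` minimal_nbhd X y = minimal_nbhd Y (h y)"
proof
  show "h ` minimal_nbhd X y \<subseteq> minimal_nbhd Y (h y)"
  proof
    fix w assume "w \<in> h ` minimal_nbhd X y"
    then obtain z where "z \<in> minimal_nbhd X y" "w = h z"
      by blast
    moreover have "z \<in> topspace X"
      using minimal_nbhd_subset_topspace[OF y] \<open>z \<in> minimal_nbhd X y\<close> by blast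
    ultimately show "w \<in> minimal_nbhd Y (h y)"
      using homeomorphic_map_minimal_nbhd_iff[OF h y] by simp
  qed
  show "minimal_nbhd Y (h y) \<subseteq> h ` minimal_nbhd X y"
  proof
    fix w assume w: "w \<in> minimal_nbhd Y (h y)"
    have surj: "h ` topspace X = topspace Y"
      using h by (rule homeomorphic_imp_surjective_map)
    then have "h y \<in> topspace Y"
      using y by blast
    then have "w \<in> h ` topspace X"
      using w minimal_nbhd_subset_topspace[of "h y" Y] surj by blast
    then obtain z where z: "z \<in> topspace X" "w = h z"
      by blast
    then have "z \<in> minimal_nbhd X y"
      using w homeomorphic_map_minimal_nbhd_iff[OF h y] by simp
    then show "w \<in> h ` minimal_nbhd X y"
      using z(2) by (rule rev_image_eqI)
  qed
qed

lemma card_minimal_nbhd_homeomorphic_map: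
  assumes h: "homeomorphic_map X Y h" and y: "y \<in> topspace X"
  shows "card (minimal_nbhd Y (h y)) = card (minimal_nbhd X y)"
proof -
  have "inj_on h (minimal_nbhd X y)"
    using homeomorphic_imp_injective_map[OF h] minimal_nbhd_subset_topspace[OF y] by (rule inj_on_subset)
  then show ?thesis
    by (metis card_image homeomorphic_map_image_minimal_nbhd[OF h y])
qed

lemma homeomorphic_maps_eq_if_minimal_nbhd:
  assumes fin: "finite (topspace X)" and t0: "t0_space X"
    and a: "homeomorphic_map X X a" and b: "homeomorphic_map X X b"
    and x: "x \<in> topspace X" and le: "a x \<in> minimal_nbhd X (b x)"
  shows "a x = b x"
proof (rule t0_space_minimal_nbhd_eqD[OF t0])
  show ax: "a x \<in> topspace X" and bx: "b x \<in> topspace X"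
    using x homeomorphic_imp_surjective_map[OF a] homeomorphic_imp_surjective_map[OF b] by blast+
  show "minimal_nbhd X (a x) = minimal_nbhd X (b x)"
  proof (rule card_subset_eq)
    show "finite (minimal_nbhd X (b x))"
      using fin minimal_nbhd_subset_topspace[OF bx] by (rule finite_subset[rotated])
    show "minimal_nbhd X (a x) \<subseteq> minimal_nbhd X (b x)"
      using le by (rule minimal_nbhd_mono)
    show "card (minimal_nbhd X (a x)) = card (minimal_nbhd X (b x))"
      using card_minimal_nbhd_homeomorphic_map[OF a x] card_minimal_nbhd_homeomorphic_map[OF b x]
      by simp
  qed
qed

lemma connected_space_locally_constant:
  assumes T: "connected_space T"
    and loc: "\<And>a. a \<in> topspace T \<Longrightarrow> \<exists>U. openin T U \<and> a \<in> U \<and> (\<forall>t\<in>U. F t = F a)"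
    and s: "s \<in> topspace T" and t: "t \<in> topspace T"
  shows "F t = F s"
proof -
  have open_fibres: "openin T {t \<in> topspace T. P (F t)}" for P
  proof (subst openin_subopen, intro ballI)
    fix a assume a: "a \<in> {t \<in> topspace T. P (F t)}"
    then have "a \<in> topspace T" by simp
    then obtain U where U: "openin T U" "a \<in> U" "\<forall>t\<in>U. F t = F a"
      using loc by blast
    have "U \<subseteq> topspace T"
      using U(1) by (rule openin_subset)
    then have "U \<subseteq> {t \<in> topspace T. P (F t)}"
      using U(3) a by auto
    with U show "\<exists>U. openin T U \<and> a \<in> U \<and> U \<subseteq> {t \<in> topspace T. P (F t)}"
      by blast
  qed
  define E where "E = {t \<in> topspace T. F t = F s}"
  have "openin T E"
    using open_fibres[of "\<lambda>v. v = F s"] by (simp add: E_def)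
  moreover have "closedin T E"
  proof -
    have "topspace T - E = {t \<in> topspace T. F t \<noteq> F s}"
      by (auto simp: E_def)
    then show ?thesis
      using open_fibres[of "\<lambda>v. v \<noteq> F s"] by (simp add: closedin_def E_def)
  qed
  moreover have "E \<noteq> {}"
    using s by (auto simp: E_def)
  ultimately have "E = topspace T"
    using T unfolding connected_space_clopen_in by blast
  then show ?thesis
    using t unfolding E_def by blast
qed

lemma continuous_map_slice:
  assumes "continuous_map (prod_topology X T) Y H" and "x \<in> topspace X"
  shows "continuous_map T Y (\<lambda>t. H (x, t))"
proof -
  have "continuous_map T (prod_topology X T) (\<lambda>t. (x, t))"
    using assms(2) by (intro continuous_map_pairedI) auto
  then show ?thesis
    using continuous_map_compose[OF _ assms(1)] by (simp add: o_def)
qed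

lemma homeomorphic_slices_constant:
  fixes H :: "'a \<times> 'b \<Rightarrow> 'a"
  assumes fin: "finite (topspace X)" and t0: "t0_space X" and T: "connected_space T"
    and H: "continuous_map (prod_topology X T) X H"
    and homeo: "\<And>t. t \<in> topspace T \<Longrightarrow> homeomorphic_map X X (\<lambda>x. H (x, t))"
    and s: "s \<in> topspace T" and t: "t \<in> topspace T" and x: "x \<in> topspace X"
  shows "H (x, t) = H (x, s)"
proof -
  define F where "F t = restrict (\<lambda>x. H (x, t)) (topspace X)" for t
  have "F t = F s"
  proof (rule connected_space_locally_constant[OF T _ s t])
    fix a assume a: "a \<in> topspace T"
    have H_a: "H (x, a) \<in> topspace X" if "x \<in> topspace X" for x
      using homeo[OF a] that homeomorphic_imp_surjective_map by blast
    define U where "U = \<Inter>(insert (topspace T)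
        ((\<lambda>x. {t \<in> topspace T. H (x, t) \<in> minimal_nbhd X (H (x, a))}) ` topspace X))"
    have "openin T {t \<in> topspace T. H (x, t) \<in> minimal_nbhd X (H (x, a))}"
      if "x \<in> topspace X" for x
      using continuous_map_slice[OF H that] openin_minimal_nbhd[OF fin H_a[OF that]]
      by (rule openin_continuous_map_preimage)
    then have "openin T U"
      unfolding U_def using fin by (intro openin_Inter) auto
    moreover have "a \<in> U"
      using a by (simp add: U_def centre_in_minimal_nbhd)
    moreover have "F t = F a" if "t \<in> U" for t
    proof -
      have tT: "t \<in> topspace T"
        and near: "\<forall>x\<in>topspace X. H (x, t) \<in> minimal_nbhd X (H (x, a))"
        using that by (auto simp: U_def)
      have "\<forall>x\<in>topspace X. H (x, t) = H (x, a)"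
        using homeomorphic_maps_eq_if_minimal_nbhd[OF fin t0 homeo[OF tT] homeo[OF a]] near
        by blast
      then show ?thesis
        unfolding F_def by (auto intro: restrict_ext)
    qed
    ultimately show "\<exists>U. openin T U \<and> a \<in> U \<and> (\<forall>t\<in>U. F t = F a)"
      by blast
  qed
  then show ?thesis
    using x by (metis F_def restrict_apply')
qed

theorem theorem1p2:
  fixes X :: "'a topology" and f g :: "'a \<Rightarrow> 'a"
  assumes "finite (topspace X)" and "t0_space X"
    and "homeomorphic_map X X f" and "homeomorphic_map X X g"
  shows "isotopic X f g \<longleftrightarrow> (\<forall>x\<in>topspace X. f x = g x)"
proof
  assume "isotopic X f g"
  then obtain H :: "'a \<times> real \<Rightarrow> 'a" where
    H: "continuous_map (prod_topology X (top_of_set {0..1})) X H" and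
    homeo: "\<forall>t\<in>{0..1}. homeomorphic_map X X (\<lambda>x. H (x, t))" and
    H0: "\<forall>x\<in>topspace X. H (x, 0) = f x" and H1: "\<forall>x\<in>topspace X. H (x, 1) = g x"
    unfolding isotopic_def by blast
  have I: "connected_space (top_of_set {0..1::real})"
    by (simp add: connected_space_subtopology)
  have "H (x, 0) = H (x, 1)" if "x \<in> topspace X" for x
    by (rule homeomorphic_slices_constant[OF assms(1,2) I H]) (use homeo that in auto)
  then show "\<forall>x\<in>topspace X. f x = g x"
    using H0 H1 by simp
next
  assume eq: "\<forall>x\<in>topspace X. f x = g x"
  show "isotopic X f g" unfolding isotopic_def
  proof (intro exI conjI ballI)
    show "continuous_map (prod_topology X (top_of_set {0..1})) X (\<lambda>p. f (fst p))"
      using continuous_map_compose[OF continuous_map_fst homeomorphic_imp_continuous_map[OF assms(3)]]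
      by (simp add: o_def)
  qed (use assms(3) eq in auto)
qed

end
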